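(* Let $q\ge5$. (i) The union of the $q+1$ $\Gamma$-planes and the $q^2+q$ $2_{\mathcal C}$-planes can be partitioned into $q+1$ pencils of planes such that each pencil consists of one $\Gamma$-plane and $q$ $2_{\mathcal C}$-planes and the axis of the pencil is a tangent to $\mathcal C$. (ii) Among $E_{n\Gamma}$-lines, only lines lying in $2_{\mathcal C}$-planes can intersect tangents; if $q\not\equiv0\pmod3$, $E_{n\Gamma}$-lines lying in $2_{\mathcal C}$-planes intersect tangents in $T$-points, and if $q\equiv0\pmod3$ they intersect tangents in $TO$-points. (iii) For every $E_{n\Gamma}$-line $\ell$, the number of $T$-points on $\ell$ equals the number of $2_{\mathcal C}$-planes through $\ell$ if $q\not\equiv0\pmod 3$, and the number of $TO$-points on $\ell$ equals the number of $2_{\mathcal C}$-planes through $\ell$ if $q\equiv0\pmod3$.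
   Context: Let $\mathbb F_q$ be the field of order $q$ and $\mathrm{PG}(3,q)$ the projective space with points $\mathbf P(x_0,x_1,x_2,x_3)$. For $t\in\mathbb F_q$ put $P(t)=\mathbf P(t^3,t^2,t,1)$, and $P(\infty)=\mathbf P(1,0,0,0)$; the twisted cubic is $\mathcal C=\{P(t):t\in\mathbb F_q\cup\{\infty\}\}$. The osculating plane at $P(t)$ is $x_0-3tx_1+3t^2x_2-t^3x_3=0$ ($t\in\mathbb F_q$) and $x_3=0$ at $P(\infty)$; these are the $\Gamma$-planes. The tangent at $P(t)$, $t\in\mathbb F_q$, is the line through $P(t)$ and $\mathbf P(3t^2,2t,1,0)$; at $P(\infty)$ it is the line through $\mathbf P(1,0,0,0),\mathbf P(0,1,0,0)$. A real chord joins two distinct points of $\mathcal C$; an imaginary chord joins $P(\tau),P(\tau^q)$, $\tau\in\mathbb F_{q^2}\setminus\mathbb F_q$; chords are real chords, tangents and imaginary chords. An axis is the intersection of two distinct osculating planes at points of $\mathcal C$, or of the osculating planes at conjugate points $P(\tau),P(\tau^q)$. An $E_{n\Gamma}$-line is a line with no point of $\mathcal C$, not contained in a $\Gamma$-plane, which is neither a chord nor an axis. A $2_{\mathcal C}$-plane is a plane containing exactly two points of $\mathcal C$. For $q\not\equiv0\pmod3$, $T$-points are points off $\mathcal C$ on a tangent; for $q\equiv0\pmod3$, $TO$-points are points off $\mathcal C$ on a tangent lying in exactly one $\Gamma$-plane. *)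

theory Defs
  imports Main "HOL-Library.Cardinality"
begin

type_synonym 'a v4 = "'a \<times> 'a \<times> 'a \<times> 'a"

definition v0 :: "'a::field v4" where "v0 = (0,0,0,0)"

definition vsc :: "'a::field \<Rightarrow> 'a v4 \<Rightarrow> 'a v4" where
  "vsc c v = (case v of (x0,x1,x2,x3) \<Rightarrow> (c*x0, c*x1, c*x2, c*x3))"

definition vadd :: "'a::field v4 \<Rightarrow> 'a v4 \<Rightarrow> 'a v4" where
  "vadd u v = (case u of (x0,x1,x2,x3) \<Rightarrow> case v of (y0,y1,y2,y3) \<Rightarrow>
      (x0+y0, x1+y1, x2+y2, x3+y3))"

definition vdot :: "'a::field v4 \<Rightarrow> 'a v4 \<Rightarrow> 'a" where
  "vdot u v = (case u of (x0,x1,x2,x3) \<Rightarrow> case v of (y0,y1,y2,y3) \<Rightarrow>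
      x0*y0 + x1*y1 + x2*y2 + x3*y3)"

definition map4 :: "('a \<Rightarrow> 'b) \<Rightarrow> 'a v4 \<Rightarrow> 'b v4" where
  "map4 f v = (case v of (x0,x1,x2,x3) \<Rightarrow> (f x0, f x1, f x2, f x3))"

section \<open>PG(3,F): points = 1-dim subspaces, lines = 2-dim subspaces, planes = 3-dim subspaces\<close>

definition pt :: "'a::field v4 \<Rightarrow> 'a v4 set" where
  "pt v = {vsc c v | c. True}"

definition PG_points :: "'a::field v4 set set" where
  "PG_points = {pt v | v. v \<noteq> v0}"

definition line_of :: "'a::field v4 \<Rightarrow> 'a v4 \<Rightarrow> 'a v4 set" where
  "line_of u v = {vadd (vsc a u) (vsc b v) | a b. True}"

definition indep2 :: "'a::field v4 \<Rightarrow> 'a v4 \<Rightarrow> bool" where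
  "indep2 u v \<longleftrightarrow> (\<forall>a b. vadd (vsc a u) (vsc b v) = v0 \<longrightarrow> a = 0 \<and> b = 0)"

definition PG_lines :: "'a::field v4 set set" where
  "PG_lines = {line_of u v | u v. indep2 u v}"

definition plane_of :: "'a::field v4 \<Rightarrow> 'a v4 set" where
  "plane_of a = {x. vdot a x = 0}"

definition PG_planes :: "'a::field v4 set set" where
  "PG_planes = {plane_of a | a. a \<noteq> v0}"

text \<open>Incidence: a point/line X lies in a line/plane Y iff X \<subseteq> Y (as subspaces).\<close>

definition pencil :: "'a::field v4 set \<Rightarrow> 'a v4 set set" where
  "pencil L = {\<pi> \<in> PG_planes. L \<subseteq> \<pi>}"

definition cv :: "'a::field \<Rightarrow> 'a v4" where
  "cv t = (t^3, t^2, t, 1)"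

definition Pt :: "'a::field \<Rightarrow> 'a v4 set" where
  "Pt t = pt (cv t)"

definition Pinf :: "'a::field v4 set" where
  "Pinf = pt (1,0,0,0)"

definition twisted_cubic :: "'a::field v4 set set" where
  "twisted_cubic = range Pt \<union> {Pinf}"

definition osc_vec :: "'a::field \<Rightarrow> 'a v4" where
  "osc_vec t = (1, -3*t, 3*t^2, -(t^3))"

definition osc_plane :: "'a::field \<Rightarrow> 'a v4 set" where
  "osc_plane t = plane_of (osc_vec t)"

definition osc_inf :: "'a::field v4 set" where
  "osc_inf = plane_of (0,0,0,1)"

definition Gamma_planes :: "'a::field v4 set set" where
  "Gamma_planes = range osc_plane \<union> {osc_inf}"

definition tangent :: "'a::field \<Rightarrow> 'a v4 set" where
  "tangent t = line_of (cv t) (3*t^2, 2*t, 1, 0)"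

definition tangent_inf :: "'a::field v4 set" where
  "tangent_inf = line_of (1,0,0,0) (0,1,0,0)"

definition tangents :: "'a::field v4 set set" where
  "tangents = range tangent \<union> {tangent_inf}"

definition real_chord :: "'a::field v4 set \<Rightarrow> bool" where
  "real_chord L \<longleftrightarrow> L \<in> PG_lines \<and>
     (\<exists>P\<in>twisted_cubic. \<exists>Q\<in>twisted_cubic. P \<noteq> Q \<and> P \<subseteq> L \<and> Q \<subseteq> L)"

text \<open>The quadratic extension F_{q^2} is given by an embedding emb of F_q into a
  field 'b with q^2 elements.  The extension of an F_q-line L to F_{q^2} is the
  F_{q^2}-span of its vectors.\<close>

definition field_emb :: "('a::field \<Rightarrow> 'b::field) \<Rightarrow> bool" where
  "field_emb emb \<longleftrightarrow> (\<forall>x y. emb (x + y) = emb x + emb y \<and> emb (x * y) = emb x * emb y)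
                      \<and> emb 1 = 1"

definition ext_line :: "('a::field \<Rightarrow> 'b::field) \<Rightarrow> 'a v4 set \<Rightarrow> 'b v4 set" where
  "ext_line emb L = {vadd (vsc a (map4 emb u)) (vsc b (map4 emb v)) | u v a b. u \<in> L \<and> v \<in> L}"

definition imag_chord :: "('a::{field,finite} \<Rightarrow> 'b::field) \<Rightarrow> 'a v4 set \<Rightarrow> bool" where
  "imag_chord emb L \<longleftrightarrow> L \<in> PG_lines \<and>
     (\<exists>\<tau>. \<tau> \<notin> range emb \<and> cv \<tau> \<in> ext_line emb L \<and> cv (\<tau> ^ CARD('a)) \<in> ext_line emb L)"

definition chord :: "('a::{field,finite} \<Rightarrow> 'b::field) \<Rightarrow> 'a v4 set \<Rightarrow> bool" where
  "chord emb L \<longleftrightarrow> real_chord L \<or> L \<in> tangents \<or> imag_chord emb L"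

definition real_axis :: "'a::field v4 set \<Rightarrow> bool" where
  "real_axis L \<longleftrightarrow> (\<exists>O1\<in>Gamma_planes. \<exists>O2\<in>Gamma_planes. O1 \<noteq> O2 \<and> L = O1 \<inter> O2)"

text \<open>Imaginary axis: the F_{q^2}-extension of L lies in the osculating planes at the
  conjugate points P(tau), P(tau^q) (hence equals their intersection).\<close>

definition imag_axis :: "('a::{field,finite} \<Rightarrow> 'b::field) \<Rightarrow> 'a v4 set \<Rightarrow> bool" where
  "imag_axis emb L \<longleftrightarrow> L \<in> PG_lines \<and>
     (\<exists>\<tau>. \<tau> \<notin> range emb \<and>
        (\<forall>x\<in>L. vdot (osc_vec \<tau>) (map4 emb x) = 0 \<and>
                vdot (osc_vec (\<tau> ^ CARD('a))) (map4 emb x) = 0))"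

definition axis :: "('a::{field,finite} \<Rightarrow> 'b::field) \<Rightarrow> 'a v4 set \<Rightarrow> bool" where
  "axis emb L \<longleftrightarrow> real_axis L \<or> imag_axis emb L"

definition EnGamma :: "('a::{field,finite} \<Rightarrow> 'b::field) \<Rightarrow> 'a v4 set \<Rightarrow> bool" where
  "EnGamma emb L \<longleftrightarrow> L \<in> PG_lines \<and> (\<forall>P\<in>twisted_cubic. \<not> P \<subseteq> L)
     \<and> (\<forall>G\<in>Gamma_planes. \<not> L \<subseteq> G) \<and> \<not> chord emb L \<and> \<not> axis emb L"

definition two_C_plane :: "'a::field v4 set \<Rightarrow> bool" where
  "two_C_plane \<pi> \<longleftrightarrow> \<pi> \<in> PG_planes \<and> card {P \<in> twisted_cubic. P \<subseteq> \<pi>} = 2"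

definition T_point :: "'a::field v4 set \<Rightarrow> bool" where
  "T_point p \<longleftrightarrow> p \<in> PG_points \<and> p \<notin> twisted_cubic \<and> (\<exists>T\<in>tangents. p \<subseteq> T)"

definition TO_point :: "'a::field v4 set \<Rightarrow> bool" where
  "TO_point p \<longleftrightarrow> T_point p \<and> card {G \<in> Gamma_planes. p \<subseteq> G} = 1"

end

(* Every plane through a tangent of the twisted cubic C is either the osculating plane at its
   point of contact or meets C in exactly one further point; the normal vectors of the planes of
   such a pencil are written down explicitly.  Conversely, the cubic polynomial cut out on C by a
   2_C-plane has a double root, so the plane contains a tangent.  Distinct tangents are skew, so
   their pencils are disjoint, which gives (i).

   A line l lying in no Gamma-plane spans a plane with a tangent T exactly when it meets T; that
   plane lies in the pencil of T without being osculating, hence is a 2_C-plane, and it is the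
   only plane of the pencil through l.  Moreover l meets T at most once, since otherwise l would
   lie in the osculating plane containing T.  So sending a T-point of l to the plane spanned by l
   and its tangent is a bijection onto the 2_C-planes through l, which gives (ii) and (iii).

   In characteristic 3 the osculating planes are exactly the planes through the line
   x0 = x3 = 0.  A point of l on two of them lies on that line, and then l lies in one of them;
   hence every T-point of l is a TO-point. *)

theory Submission
  imports Defs "HOL-Algebra.Sylow" "HOL-Algebra.Multiplicative_Group"
begin

(* The main theorem uses \<Pi> as a bound variable, which the imported FuncSet syntax would
   otherwise parse as a binder. *)
no_syntax
  "_Pi" :: "pttrn \<Rightarrow> 'a set \<Rightarrow> 'b set \<Rightarrow> ('a \<Rightarrow> 'b) set"
    (\<open>(\<open>indent=3 notation=\<open>binder \<Pi>\<in>\<close>\<close>\<Pi> _\<in>_./ _)\<close> 10)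

lemma det2_eq_zero_imp_proportional:
  assumes "(c0, c1) \<noteq> (0, 0)" "(d0, d1) \<noteq> (0, 0)" "c0*d1 = c1*(d0::'a::field)"
  shows "\<exists>k. k \<noteq> 0 \<and> d0 = k*c0 \<and> d1 = k*c1"
proof (cases "c0 = 0")
  case True
  with assms show ?thesis by (intro exI[of _ "d1/c1"]) auto
next
  case False
  with assms show ?thesis by (intro exI[of _ "d0/c0"]) (auto simp: field_simps)
qed

lemma det2_neq_zero_imp_trivial_solution:
  assumes "c0*x + c1*y = 0" "d0*x + d1*y = 0" "c0*d1 \<noteq> c1*(d0::'a::field)"
  shows "x = 0 \<and> y = 0"
proof -
  have "(c0*d1 - c1*d0) * x = d1*(c0*x + c1*y) - c1*(d0*x + d1*y)"
    and "(c0*d1 - c1*d0) * y = c0*(d0*x + d1*y) - d0*(c0*x + c1*y)"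
    by (simp_all add: algebra_simps)
  with assms show ?thesis by (metis diff_self mult_eq_0_iff right_minus_eq)
qed

lemma cubic_two_roots_imp_double_root:
  fixes c0 c1 c2 c3 :: "'a::field"
  assumes "c0 \<noteq> 0" and roots: "{x. c0*x^3 + c1*x^2 + c2*x + c3 = 0} = {a, b}" and "a \<noteq> b"
  shows "3*c0*a^2 + 2*c1*a + c2 = 0 \<or> 3*c0*b^2 + 2*c1*b + c2 = 0"
proof -
  have fa: "c0*a^3 + c1*a^2 + c2*a + c3 = 0" and fb: "c0*b^3 + c1*b^2 + c2*b + c3 = 0"
    using roots by blast+
  have "(a - b) * (c0*(a^2 + a*b + b^2) + c1*(a + b) + c2) =
      (c0*a^3 + c1*a^2 + c2*a + c3) - (c0*b^3 + c1*b^2 + c2*b + c3)"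
    by (simp add: algebra_simps power2_eq_square power3_eq_cube)
  with fa fb \<open>a \<noteq> b\<close> have "c0*(a^2 + a*b + b^2) + c1*(a + b) + c2 = 0" by simp
  then have c2: "c2 = -(c0*(a^2 + a*b + b^2) + c1*(a + b))" by (simp only: add_eq_0_iff)
  from fa have c3: "c3 = -(c0*a^3 + c1*a^2 + c2*a)" by (simp only: add_eq_0_iff)
  define r where "r = -(c1 + c0*(a + b))/c0"
  have c1: "c1 = -(c0*r) - c0*(a + b)" using \<open>c0 \<noteq> 0\<close> by (simp add: r_def field_simps)
  \<comment> \<open>\<open>r\<close> is the third root of the cubic, which can only be \<open>a\<close> or \<open>b\<close>\<close>
  have "c0*r^3 + c1*r^2 + c2*r + c3 = (r - a)*(r - b)*(c0*r + c1 + c0*(a + b))"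
    unfolding c3 c2 by (simp add: algebra_simps power2_eq_square power3_eq_cube)
  also have "\<dots> = 0" by (simp add: c1)
  finally have "r = a \<or> r = b" using roots by blast
  then show ?thesis
  proof
    assume "r = a"
    then show ?thesis unfolding c2 c1 by (simp add: algebra_simps power2_eq_square)
  next
    assume "r = b"
    then show ?thesis unfolding c2 c1 by (simp add: algebra_simps power2_eq_square)
  qed
qed

lemma quadratic_one_root_imp_double_root:
  fixes c1 c2 c3 :: "'a::field"
  assumes "c1 \<noteq> 0" and root: "{x. c1*x^2 + c2*x + c3 = 0} = {a}"
  shows "2*c1*a + c2 = 0"
proof -
  have "c1*a^2 + c2*a + c3 = 0" using root by blast
  then have c3: "c3 = -(c1*a^2 + c2*a)" by (simp only: add_eq_0_iff)
  define r where "r = -(c1*a + c2)/c1"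
  have "c1*r^2 + c2*r + c3 = (r - a)*(c1*r + c1*a + c2)"
    unfolding c3 by (simp add: algebra_simps power2_eq_square)
  also have "\<dots> = 0" using \<open>c1 \<noteq> 0\<close> by (simp add: r_def field_simps)
  finally have "r = a" using root by blast
  with \<open>c1 \<noteq> 0\<close> have "-(c1*a + c2) = c1*a" by (simp add: r_def field_simps)
  then show ?thesis by (simp add: algebra_simps neg_eq_iff_add_eq_0)
qed

lemma prime_dvd_card_imp_of_nat_eq_0:
  assumes "prime p" "p dvd CARD('a::{idom,finite})"
  shows "(of_nat p :: 'a) = 0"
proof -
  define G :: "'a monoid" where "G = \<lparr>carrier = UNIV, monoid.mult = (+), one = 0\<rparr>"
  interpret group G
  proof (rule groupI)
    fix x assume "x \<in> carrier G"
    show "\<exists>y\<in>carrier G. y \<otimes>\<^bsub>G\<^esub> x = \<one>\<^bsub>G\<^esub>"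
      by (intro bexI[of _ "-x"]) (auto simp: G_def)
  qed (auto simp: G_def add_ac)
  have pow: "x [^]\<^bsub>G\<^esub> n = of_nat n * x" for x :: 'a and n :: nat
    by (induction n) (auto simp: G_def algebra_simps)
  have order: "order G = p ^ 1 * (CARD('a) div p)"
    using assms(2) by (simp add: order_def G_def)
  have "finite (carrier G)" by (simp add: G_def)
  with order obtain H where H: "subgroup H G" "card H = p ^ 1"
    using sylow_thm[OF assms(1) is_group order] by blast
  have "\<not> H \<subseteq> {0}"
  proof
    assume "H \<subseteq> {0}"
    then have "card H \<le> card {0::'a}" by (intro card_mono) simp_all
    with H(2) prime_gt_1_nat[OF assms(1)] show False by simp
  qed
  then obtain h where h: "h \<in> H" "h \<noteq> 0" by blast
  interpret H: group "G\<lparr>carrier := H\<rparr>" by (rule subgroup_imp_group[OF H(1)])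
  have "h [^]\<^bsub>G\<lparr>carrier := H\<rparr>\<^esub> order (G\<lparr>carrier := H\<rparr>) = \<one>\<^bsub>G\<lparr>carrier := H\<rparr>\<^esub>"
    using h(1) by (intro H.pow_order_eq_1) simp
  moreover have "order (G\<lparr>carrier := H\<rparr>) = p" using H(2) by (simp add: order_def)
  ultimately have "h [^]\<^bsub>G\<^esub> p = \<one>\<^bsub>G\<^esub>" by (simp flip: nat_pow_consistent)
  then have "of_nat p * h = \<one>\<^bsub>G\<^esub>" by (simp only: pow)
  then have "of_nat p * h = 0" by (simp add: G_def)
  with h(2) show ?thesis by simp
qed

lemma three_eq_0_if_card_mod_3:
  "CARD('a::{field,finite}) mod 3 = 0 \<Longrightarrow> (3::'a) = 0"
  using prime_dvd_card_imp_of_nat_eq_0[of 3, where 'a='a] by (simp add: mod_eq_0_iff_dvd)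

lemma cube_diff_char_3: "(3::'a::field) = 0 \<Longrightarrow> (s - s')^3 = s^3 - (s'::'a)^3"
proof -
  have "(s - s')^3 = s^3 - 3*s^2*s' + 3*s*s'^2 - s'^3"
    by (simp add: algebra_simps power2_eq_square power3_eq_cube)
  then show "(3::'a) = 0 \<Longrightarrow> ?thesis" by simp
qed

lemma surj_cube_char_3:
  assumes "(3::'a::{field,finite}) = 0" shows "surj (\<lambda>x::'a. x^3)"
proof -
  have "inj (\<lambda>x::'a. x^3)"
  proof (rule injI)
    fix x y :: 'a assume "x^3 = y^3"
    then have "(x - y)^3 = 0" using cube_diff_char_3[OF assms] by simp
    then show "x = y" by simp
  qed
  then show ?thesis by (simp add: finite_UNIV_inj_surj)
qed

lemma v0_eq: "v0 = (0,0,0,0)"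
  by (simp add: v0_def)

lemma vsc_eq [simp]: "vsc c (x0,x1,x2,x3) = (c*x0, c*x1, c*x2, c*x3)"
  by (simp add: vsc_def)

lemma vadd_eq [simp]: "vadd (x0,x1,x2,x3) (y0,y1,y2,y3) = (x0+y0, x1+y1, x2+y2, x3+y3)"
  by (simp add: vadd_def)

lemma vdot_eq [simp]: "vdot (a0,a1,a2,a3) (x0,x1,x2,x3) = a0*x0 + a1*x1 + a2*x2 + a3*x3"
  by (simp add: vdot_def)

lemma vdot_vsc_right [simp]: "vdot a (vsc k x) = k * vdot a (x::'a::field v4)"
  by (cases a rule: prod_cases4, cases x rule: prod_cases4) (simp add: algebra_simps)

lemma vdot_vadd_right [simp]: "vdot a (vadd x y) = vdot a x + vdot a (y::'a::field v4)"
  by (cases a rule: prod_cases4, cases x rule: prod_cases4, cases y rule: prod_cases4)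
    (simp add: algebra_simps)

lemma vdot_vsc_left [simp]: "vdot (vsc k a) x = k * vdot a (x::'a::field v4)"
  by (cases a rule: prod_cases4, cases x rule: prod_cases4) (simp add: algebra_simps)

lemma vdot_vadd_left [simp]: "vdot (vadd a b) x = vdot a x + vdot b (x::'a::field v4)"
  by (cases a rule: prod_cases4, cases b rule: prod_cases4, cases x rule: prod_cases4)
    (simp add: algebra_simps)

lemma vadd_vsc_zero: "vadd (vsc 0 u) (vsc 0 v) = (v0::'a::field v4)"
  by (cases u rule: prod_cases4, cases v rule: prod_cases4) (simp add: v0_eq)

lemma vadd_vsc_mult:
  "vadd (vsc (k*a) u) (vsc (k*b) v) = vsc k (vadd (vsc a u) (vsc b (v::'a::field v4)))"
  by (cases u rule: prod_cases4, cases v rule: prod_cases4) (simp add: algebra_simps)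

lemma indep2_nonzero: "indep2 u v \<Longrightarrow> (a, b) \<noteq> (0, 0) \<Longrightarrow> vadd (vsc a u) (vsc b v) \<noteq> v0"
  by (auto simp: indep2_def)

lemma indep2_imp_nonzero:
  assumes "indep2 u v" shows "u \<noteq> v0" "v \<noteq> (v0::'a::field v4)"
proof -
  have "vadd (vsc 1 u) (vsc 0 v) = u" "vadd (vsc 0 u) (vsc 1 v) = v"
    by (cases u rule: prod_cases4, cases v rule: prod_cases4, simp)+
  with assms show "u \<noteq> v0" "v \<noteq> v0" unfolding indep2_def by (metis one_neq_zero)+
qed

lemma mem_pt: "x \<in> pt v \<longleftrightarrow> (\<exists>c. x = vsc c v)"
  by (auto simp: pt_def)

lemma pt_self: "(v::'a::field v4) \<in> pt v"
  unfolding mem_pt by (rule exI[of _ 1], cases v rule: prod_cases4) simp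

lemma pt_vsc: "k \<noteq> 0 \<Longrightarrow> pt (vsc k x) = pt (x::'a::field v4)"
proof -
  assume k: "k \<noteq> 0"
  have "vsc c (vsc k x) = vsc (c*k) x" for c
    by (cases x rule: prod_cases4) (simp add: algebra_simps)
  moreover have "vsc c x = vsc (c/k) (vsc k x)" for c
    using k by (cases x rule: prod_cases4) (simp add: field_simps)
  ultimately show ?thesis unfolding pt_def by (metis (no_types, lifting))
qed

lemma mem_line_of: "x \<in> line_of u v \<longleftrightarrow> (\<exists>a b. x = vadd (vsc a u) (vsc b v))"
  by (auto simp: line_of_def)

lemma line_of_left: "(u::'a::field v4) \<in> line_of u v"
  unfolding mem_line_of
  by (rule exI[of _ 1], rule exI[of _ 0], cases u rule: prod_cases4, cases v rule: prod_cases4) simp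

lemma line_of_right: "(v::'a::field v4) \<in> line_of u v"
  unfolding mem_line_of
  by (rule exI[of _ 0], rule exI[of _ 1], cases u rule: prod_cases4, cases v rule: prod_cases4) simp

lemma mem_plane_of: "x \<in> plane_of a \<longleftrightarrow> vdot a x = 0"
  by (simp add: plane_of_def)

lemma plane_of_vsc: "k \<noteq> 0 \<Longrightarrow> plane_of (vsc k a) = plane_of (a::'a::field v4)"
  by (auto simp: plane_of_def)

lemma plane_of_in_PG_planes: "c \<noteq> v0 \<Longrightarrow> plane_of c \<in> PG_planes"
  unfolding PG_planes_def by blast

lemma pt_subset_plane_of_iff: "pt v \<subseteq> plane_of a \<longleftrightarrow> vdot a (v::'a::field v4) = 0"
proof
  assume "pt v \<subseteq> plane_of a"
  then show "vdot a v = 0" using pt_self[of v] by (auto simp: mem_plane_of)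
qed (auto simp: mem_pt mem_plane_of)

lemma line_of_subset_plane_of_iff:
  "line_of u v \<subseteq> plane_of a \<longleftrightarrow> vdot a (u::'a::field v4) = 0 \<and> vdot a v = 0"
proof
  assume "line_of u v \<subseteq> plane_of a"
  then show "vdot a u = 0 \<and> vdot a v = 0"
    using line_of_left[of u v] line_of_right[of v u] by (auto simp: mem_plane_of)
qed (auto simp: mem_line_of mem_plane_of)

lemma pt_subset_line_of_iff: "pt z \<subseteq> line_of u v \<longleftrightarrow> z \<in> line_of u (v::'a::field v4)"
proof
  assume "z \<in> line_of u v"
  then obtain a b where "z = vadd (vsc a u) (vsc b v)" by (auto simp: mem_line_of)
  then have "vsc c z = vadd (vsc (c*a) u) (vsc (c*b) v)" for c
    by (simp add: vadd_vsc_mult)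
  then show "pt z \<subseteq> line_of u v" by (auto simp: pt_def line_of_def)
qed (use pt_self[of z] in blast)

lemma PG_point_in_subspace:
  "p \<in> PG_points \<Longrightarrow> p \<subseteq> X \<Longrightarrow> \<exists>z. z \<noteq> v0 \<and> p = pt z \<and> z \<in> (X::'a::field v4 set)"
  using pt_self by (fastforce simp: PG_points_def)

lemma PG_points_pt: "p \<in> PG_points \<longleftrightarrow> (\<exists>z. z \<noteq> v0 \<and> p = pt (z::'a::field v4))"
  by (auto simp: PG_points_def)

lemma pencil_iff: "\<pi> \<in> pencil L \<longleftrightarrow> (\<exists>c. c \<noteq> v0 \<and> \<pi> = plane_of c \<and> L \<subseteq> plane_of c)"
  by (auto simp: pencil_def PG_planes_def)

lemma line_of_subset_plane_of_if_two_points: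
  assumes z1: "z1 \<in> line_of u v" "z1 \<noteq> v0" and z2: "z2 \<in> line_of u v" "z2 \<noteq> v0"
    and ne: "pt z1 \<noteq> pt z2" and "vdot w z1 = 0" "vdot w z2 = 0"
  shows "line_of u v \<subseteq> plane_of (w::'a::field v4)"
proof -
  obtain a b where ab: "z1 = vadd (vsc a u) (vsc b v)" using z1 by (auto simp: mem_line_of)
  obtain c d where cd: "z2 = vadd (vsc c u) (vsc d v)" using z2 by (auto simp: mem_line_of)
  have "a * vdot w u + b * vdot w v = 0" "c * vdot w u + d * vdot w v = 0"
    using assms ab cd by simp_all
  moreover have "a*d \<noteq> b*c"
  proof
    assume "a*d = b*c"
    moreover have "(a, b) \<noteq> (0, 0)" "(c, d) \<noteq> (0, 0)"
      using z1(2) z2(2) ab cd vadd_vsc_zero by fastforce+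
    ultimately obtain k where "k \<noteq> 0" "c = k*a" "d = k*b"
      using det2_eq_zero_imp_proportional by blast
    then have "pt z2 = pt z1" using ab cd by (simp add: vadd_vsc_mult pt_vsc)
    with ne show False by simp
  qed
  ultimately show ?thesis
    using det2_neq_zero_imp_trivial_solution by (simp add: line_of_subset_plane_of_iff)
qed

subsection \<open>Pencils of planes through a line\<close>

definition line_normals :: "'a::field v4 set \<Rightarrow> 'a v4 \<Rightarrow> 'a v4 \<Rightarrow> bool" where
  "line_normals L n1 n2 \<longleftrightarrow> indep2 n1 n2 \<and> L = plane_of n1 \<inter> plane_of n2 \<and>
     (\<forall>c. L \<subseteq> plane_of c \<longrightarrow> (\<exists>a b. c = vadd (vsc a n1) (vsc b n2)))"

lemma line_normals_subset_plane_of: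
  "line_normals L n1 n2 \<Longrightarrow> L \<subseteq> plane_of (vadd (vsc a n1) (vsc b n2))"
  by (auto simp: line_normals_def mem_plane_of)

lemma pencil_line_normals_iff:
  assumes "line_normals L n1 n2"
  shows "\<pi> \<in> pencil L \<longleftrightarrow>
    (\<exists>a b. (a, b) \<noteq> (0, 0) \<and> \<pi> = plane_of (vadd (vsc a n1) (vsc b n2)))"
proof
  assume "\<pi> \<in> pencil L"
  then obtain c where "c \<noteq> v0" "\<pi> = plane_of c" "L \<subseteq> plane_of c"
    by (auto simp: pencil_iff)
  with assms show "\<exists>a b. (a, b) \<noteq> (0, 0) \<and> \<pi> = plane_of (vadd (vsc a n1) (vsc b n2))"
    unfolding line_normals_def by (metis vadd_vsc_zero prod.inject)
next
  assume "\<exists>a b. (a, b) \<noteq> (0, 0) \<and> \<pi> = plane_of (vadd (vsc a n1) (vsc b n2))"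
  then obtain a b where "(a, b) \<noteq> (0, 0)" "\<pi> = plane_of (vadd (vsc a n1) (vsc b n2))"
    by blast
  moreover from this assms have "vadd (vsc a n1) (vsc b n2) \<noteq> v0"
    by (auto simp: line_normals_def dest: indep2_nonzero)
  ultimately show "\<pi> \<in> pencil L"
    unfolding pencil_iff using line_normals_subset_plane_of[OF assms] by blast
qed

lemma pencil_Int_subset:
  assumes L: "line_normals L n1 n2" and "\<pi>1 \<in> pencil L" "\<pi>2 \<in> pencil L" "\<pi>1 \<noteq> \<pi>2"
  shows "\<pi>1 \<inter> \<pi>2 \<subseteq> L"
proof
  fix z assume z: "z \<in> \<pi>1 \<inter> \<pi>2"
  obtain a b where ab: "(a, b) \<noteq> (0, 0)" "\<pi>1 = plane_of (vadd (vsc a n1) (vsc b n2))"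
    using assms pencil_line_normals_iff by blast
  obtain a' b' where ab': "(a', b') \<noteq> (0, 0)" "\<pi>2 = plane_of (vadd (vsc a' n1) (vsc b' n2))"
    using assms pencil_line_normals_iff by blast
  have "a*b' \<noteq> b*a'"
  proof
    assume "a*b' = b*a'"
    then obtain k where "k \<noteq> 0" "a' = k*a" "b' = k*b"
      using det2_eq_zero_imp_proportional ab(1) ab'(1) by blast
    then have "\<pi>2 = \<pi>1" using ab ab' by (simp add: vadd_vsc_mult plane_of_vsc)
    with \<open>\<pi>1 \<noteq> \<pi>2\<close> show False by simp
  qed
  moreover have "a * vdot n1 z + b * vdot n2 z = 0" "a' * vdot n1 z + b' * vdot n2 z = 0"
    using z ab ab' by (auto simp: mem_plane_of)
  ultimately have "vdot n1 z = 0 \<and> vdot n2 z = 0"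
    using det2_neq_zero_imp_trivial_solution by blast
  with L show "z \<in> L" by (simp add: line_normals_def mem_plane_of)
qed

lemma line_normals_planes_in_pencil:
  assumes "line_normals L n1 n2" shows "plane_of n1 \<in> pencil L" "plane_of n2 \<in> pencil L"
  using assms indep2_imp_nonzero[of n1 n2]
  by (auto simp: line_normals_def pencil_def intro: plane_of_in_PG_planes)

lemma pencil_normal_orthogonal:
  "\<exists>a b. (a, b) \<noteq> (0, 0) \<and> vdot (vadd (vsc a n1) (vsc b n2)) (w::'a::field v4) = 0"
proof (cases "vdot n1 w = 0")
  case True
  then show ?thesis by (intro exI[of _ 1] exI[of _ 0]) simp
next
  case False
  then show ?thesis
    by (intro exI[of _ "vdot n2 w"] exI[of _ "- vdot n1 w"]) (simp add: algebra_simps)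
qed

lemma pencil_plane_containing_line:
  assumes L: "line_normals L n1 n2" and z: "z \<in> line_of u v" "z \<noteq> v0" "z \<in> L"
  shows "\<exists>\<pi>\<in>pencil L. line_of u v \<subseteq> \<pi>"
proof -
  obtain \<alpha> \<beta> where z_eq: "z = vadd (vsc \<alpha> u) (vsc \<beta> v)" using z(1) by (auto simp: mem_line_of)
  have orth_z: "vdot (vadd (vsc a n1) (vsc b n2)) z = 0" for a b
    using line_normals_subset_plane_of[OF L] z(3) unfolding mem_plane_of[symmetric] by blast
  have "\<exists>a b. (a, b) \<noteq> (0, 0) \<and> line_of u v \<subseteq> plane_of (vadd (vsc a n1) (vsc b n2))"
  proof (cases "\<beta> = 0")
    case False
    obtain a b where "(a, b) \<noteq> (0, 0)" "vdot (vadd (vsc a n1) (vsc b n2)) u = 0"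
      using pencil_normal_orthogonal by blast
    with orth_z[of a b] False z_eq show ?thesis
      by (auto simp: line_of_subset_plane_of_iff simp del: vdot_vadd_left vdot_vsc_left)
  next
    case True
    then have "\<alpha> \<noteq> 0" using z(2) z_eq vadd_vsc_zero by metis
    obtain a b where "(a, b) \<noteq> (0, 0)" "vdot (vadd (vsc a n1) (vsc b n2)) v = 0"
      using pencil_normal_orthogonal by blast
    with orth_z[of a b] \<open>\<alpha> \<noteq> 0\<close> z_eq show ?thesis
      by (auto simp: line_of_subset_plane_of_iff simp del: vdot_vadd_left vdot_vsc_left)
  qed
  with pencil_line_normals_iff[OF L] show ?thesis by blast
qed

lemma line_in_pencil_plane_meets_axis:
  assumes L: "line_normals L n1 n2" and "indep2 u v"
    and \<pi>: "\<pi> \<in> pencil L" "line_of u v \<subseteq> \<pi>" and \<sigma>: "\<sigma> \<in> pencil L" "\<not> line_of u v \<subseteq> \<sigma>"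
  shows "\<exists>z. z \<noteq> v0 \<and> z \<in> line_of u v \<and> z \<in> L"
proof -
  obtain w where w: "\<sigma> = plane_of w" using \<sigma> by (auto simp: pencil_iff)
  define z where "z = vadd (vsc (vdot w v) u) (vsc (- vdot w u) v)"
  have "(vdot w v, - vdot w u) \<noteq> (0, 0)"
    using \<sigma>(2) by (auto simp: w line_of_subset_plane_of_iff)
  then have "z \<noteq> v0" unfolding z_def by (rule indep2_nonzero[OF \<open>indep2 u v\<close>])
  moreover have "z \<in> line_of u v" unfolding z_def mem_line_of by blast
  moreover have "z \<in> \<sigma>" by (simp add: z_def w mem_plane_of mult.commute)
  moreover have "\<pi> \<noteq> \<sigma>" using \<pi>(2) \<sigma>(2) by blast
  ultimately show ?thesis using pencil_Int_subset[OF L \<pi>(1) \<sigma>(1)] \<pi>(2) by blast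
qed

subsection \<open>Points, tangents and osculating planes of the twisted cubic\<close>

definition tan_dir :: "'a::field \<Rightarrow> 'a v4" where
  "tan_dir t = (3*t^2, 2*t, 1, 0)"

lemma tangent_eq: "tangent t = line_of (cv t) (tan_dir t)"
  by (simp add: tangent_def tan_dir_def)

lemma vdot_cv: "vdot (c0,c1,c2,c3) (cv x) = c0*x^3 + c1*x^2 + c2*x + c3"
  by (simp add: cv_def mult.commute)

lemma vdot_tan_dir: "vdot (c0,c1,c2,c3) (tan_dir x) = 3*c0*x^2 + 2*c1*x + (c2::'a::field)"
  by (simp add: tan_dir_def algebra_simps)

lemma tangent_subset_plane_of_iff:
  "tangent t \<subseteq> plane_of c \<longleftrightarrow> vdot c (cv t) = 0 \<and> vdot c (tan_dir t) = 0"
  by (simp add: tangent_eq line_of_subset_plane_of_iff)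

lemma tangent_inf_subset_plane_of_iff:
  "tangent_inf \<subseteq> plane_of (c0,c1,c2,c3) \<longleftrightarrow> c0 = 0 \<and> (c1::'a::field) = 0"
  by (simp add: tangent_inf_def line_of_subset_plane_of_iff)

lemma Pt_subset_plane_of_iff: "Pt x \<subseteq> plane_of c \<longleftrightarrow> vdot c (cv x) = 0"
  by (simp add: Pt_def pt_subset_plane_of_iff)

lemma Pinf_subset_plane_of_iff: "Pinf \<subseteq> plane_of (c0,c1,c2,c3) \<longleftrightarrow> (c0::'a::field) = 0"
  by (simp add: Pinf_def pt_subset_plane_of_iff)

lemma inj_Pt: "inj (Pt :: 'a::field \<Rightarrow> _)"
proof (rule injI)
  fix s t :: 'a assume "Pt s = Pt t"
  then have "cv s \<in> pt (cv t)" using pt_self[of "cv s"] by (simp add: Pt_def)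
  then show "s = t" by (auto simp: mem_pt cv_def)
qed

lemma Pt_neq_Pinf: "Pt t \<noteq> Pinf"
proof
  assume "Pt t = Pinf"
  then have "cv t \<in> pt (1,0,0,0)" using pt_self[of "cv t"] by (simp add: Pt_def Pinf_def)
  then show False by (auto simp: mem_pt cv_def)
qed

definition cubic_points :: "'a::field v4 set \<Rightarrow> 'a v4 set set" where
  "cubic_points \<pi> = {P \<in> twisted_cubic. P \<subseteq> \<pi>}"

lemma two_C_plane_iff: "two_C_plane \<pi> \<longleftrightarrow> \<pi> \<in> PG_planes \<and> card (cubic_points \<pi>) = 2"
  by (simp add: two_C_plane_def cubic_points_def)

lemma cubic_points_plane_of:
  "cubic_points (plane_of (c0,c1,c2,c3)) =
     Pt ` {x. vdot (c0,c1,c2,c3) (cv x) = 0} \<union> (if (c0::'a::field) = 0 then {Pinf} else {})"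
proof -
  have "cubic_points (plane_of (c0,c1,c2,c3)) =
      Pt ` {x. Pt x \<subseteq> plane_of (c0,c1,c2,c3)} \<union> {P. P = Pinf \<and> Pinf \<subseteq> plane_of (c0,c1,c2,c3)}"
    unfolding cubic_points_def twisted_cubic_def by blast
  also have "\<dots> = Pt ` {x. vdot (c0,c1,c2,c3) (cv x) = 0} \<union> {P. P = Pinf \<and> c0 = 0}"
    by (simp only: Pt_subset_plane_of_iff Pinf_subset_plane_of_iff)
  finally show ?thesis by auto
qed

text \<open>Normal vectors of the planes joining a tangent to a further point of the cubic:
  the tangent at \<open>P(t)\<close> with \<open>P(r)\<close> (the osculating plane if \<open>r = t\<close>), the tangent at
  \<open>P(t)\<close> with \<open>P(\<infinity>)\<close>, and the tangent at \<open>P(\<infinity>)\<close> with \<open>P(s)\<close>.\<close>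

definition tan_pt_vec :: "'a::field \<Rightarrow> 'a \<Rightarrow> 'a v4" where
  "tan_pt_vec t r = (1, -(2*t + r), t^2 + 2*t*r, -(t^2*r))"

definition tan_Pinf_vec :: "'a::field \<Rightarrow> 'a v4" where
  "tan_Pinf_vec t = (0, 1, -2*t, t^2)"

definition taninf_pt_vec :: "'a::field \<Rightarrow> 'a v4" where
  "taninf_pt_vec s = (0, 0, 1, -s)"

lemma tan_pt_vec_self: "tan_pt_vec t t = osc_vec t"
  by (simp add: tan_pt_vec_def osc_vec_def power2_eq_square power3_eq_cube)

lemma osc_plane_eq: "osc_plane t = plane_of (tan_pt_vec t t)"
  by (simp add: osc_plane_def tan_pt_vec_self)

lemma vdot_osc_vec_cv: "vdot (osc_vec t) (cv x) = (x - t)^3"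
  by (simp add: osc_vec_def cv_def power2_eq_square power3_eq_cube algebra_simps)

lemma vdot_tan_pt_vec_cv: "vdot (tan_pt_vec t r) (cv x) = (x - t)^2 * (x - r)"
  by (simp add: tan_pt_vec_def cv_def power2_eq_square power3_eq_cube algebra_simps)

lemma vdot_tan_Pinf_vec_cv: "vdot (tan_Pinf_vec t) (cv x) = (x - t)^2"
  by (simp add: tan_Pinf_vec_def cv_def power2_eq_square algebra_simps)

lemma vdot_taninf_pt_vec_cv: "vdot (taninf_pt_vec s) (cv x) = x - s"
  by (simp add: taninf_pt_vec_def cv_def)

lemma vdot_osc_vec_tan_dir: "vdot (osc_vec t) (tan_dir s) = 3 * (s - t)^2"
  by (simp add: osc_vec_def tan_dir_def power2_eq_square algebra_simps)

lemma vdot_tan_Pinf_vec_tan_dir: "vdot (tan_Pinf_vec t) (tan_dir s) = 2 * (s - t)"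
  by (simp add: tan_Pinf_vec_def tan_dir_def algebra_simps)

lemma cubic_points_tan_pt_vec: "cubic_points (plane_of (tan_pt_vec t r)) = {Pt t, Pt r}"
proof -
  have "{x. vdot (tan_pt_vec t r) (cv x) = 0} = {t, r}" by (auto simp: vdot_tan_pt_vec_cv)
  then show ?thesis unfolding tan_pt_vec_def by (subst cubic_points_plane_of) simp
qed

lemma cubic_points_tan_Pinf_vec: "cubic_points (plane_of (tan_Pinf_vec t)) = {Pt t, Pinf}"
proof -
  have "{x. vdot (tan_Pinf_vec t) (cv x) = 0} = {t}" by (auto simp: vdot_tan_Pinf_vec_cv)
  then show ?thesis unfolding tan_Pinf_vec_def by (subst cubic_points_plane_of) auto
qed

lemma cubic_points_taninf_pt_vec: "cubic_points (plane_of (taninf_pt_vec s)) = {Pt s, Pinf}"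
proof -
  have "{x. vdot (taninf_pt_vec s) (cv x) = 0} = {s}" by (auto simp: vdot_taninf_pt_vec_cv)
  then show ?thesis unfolding taninf_pt_vec_def by (subst cubic_points_plane_of) auto
qed

lemma cubic_points_osc_inf: "cubic_points (osc_inf :: 'a::field v4 set) = {Pinf}"
proof -
  have "{x. vdot (0,0,0,1) (cv x) = (0::'a)} = {}" by (simp add: cv_def)
  then show ?thesis unfolding osc_inf_def by (subst cubic_points_plane_of) simp
qed

lemma card_cubic_points_Gamma: "G \<in> Gamma_planes \<Longrightarrow> card (cubic_points G) = 1"
  by (auto simp: Gamma_planes_def osc_plane_eq cubic_points_tan_pt_vec cubic_points_osc_inf)

lemma Gamma_not_two_C: "G \<in> Gamma_planes \<Longrightarrow> \<not> two_C_plane G"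
  by (simp add: two_C_plane_iff card_cubic_points_Gamma)

lemma two_C_plane_tan_pt_vec:
  assumes "r \<noteq> t" shows "two_C_plane (plane_of (tan_pt_vec t r))"
proof -
  have "Pt t \<noteq> Pt r" using assms inj_Pt by (metis injD)
  then show ?thesis unfolding two_C_plane_iff cubic_points_tan_pt_vec
    by (intro conjI plane_of_in_PG_planes) (auto simp: tan_pt_vec_def v0_eq)
qed

lemma two_C_plane_tan_Pinf_vec: "two_C_plane (plane_of (tan_Pinf_vec t))"
  unfolding two_C_plane_iff cubic_points_tan_Pinf_vec
  by (intro conjI plane_of_in_PG_planes) (auto simp: tan_Pinf_vec_def v0_eq Pt_neq_Pinf)

lemma two_C_plane_taninf_pt_vec: "two_C_plane (plane_of (taninf_pt_vec s))"
  unfolding two_C_plane_iff cubic_points_taninf_pt_vec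
  by (intro conjI plane_of_in_PG_planes) (auto simp: taninf_pt_vec_def v0_eq Pt_neq_Pinf)

lemma two_C_plane_contains_tangent:
  assumes "two_C_plane (\<pi> :: 'a::{field,finite} v4 set)"
  shows "\<exists>T\<in>tangents. T \<subseteq> \<pi>"
proof -
  obtain c where "c \<noteq> v0" and \<pi>: "\<pi> = plane_of c" and card2: "card (cubic_points \<pi>) = 2"
    using assms by (auto simp: two_C_plane_iff PG_planes_def)
  obtain c0 c1 c2 c3 where c: "c = (c0,c1,c2,c3)" by (cases c rule: prod_cases4)
  define Z where "Z = {x. c0*x^3 + c1*x^2 + c2*x + c3 = 0}"
  have cubic_points: "cubic_points \<pi> = Pt ` Z \<union> (if c0 = 0 then {Pinf} else {})"
    unfolding \<pi> c Z_def cubic_points_plane_of vdot_cv ..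
  have card_Pt: "card (Pt ` Z) = card Z" by (rule card_image[OF inj_on_subset[OF inj_Pt]]) simp
  have tangent: "\<exists>T\<in>tangents. T \<subseteq> \<pi>" if "a \<in> Z" "3*c0*a^2 + 2*c1*a + c2 = 0" for a
    using that by (auto simp: tangents_def \<pi> c Z_def tangent_subset_plane_of_iff vdot_cv vdot_tan_dir)
  show ?thesis
  proof (cases "c0 = 0")
    case False
    with card2 cubic_points card_Pt have "card Z = 2" by simp
    then obtain a b where "Z = {a, b}" "a \<noteq> b" by (auto simp: card_2_iff)
    with False show ?thesis
      using cubic_two_roots_imp_double_root[of c0 c1 c2 c3 a b] tangent unfolding Z_def by blast
  next
    case True
    have "Pinf \<notin> Pt ` Z" using Pt_neq_Pinf by blast
    with True card2 cubic_points card_Pt have "card Z = 1" by simp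
    then obtain a where a: "Z = {a}" by (auto simp: card_1_singleton_iff)
    show ?thesis
    proof (cases "c1 = 0")
      case True
      with \<open>c0 = 0\<close> have "tangent_inf \<subseteq> \<pi>" by (simp add: \<pi> c tangent_inf_subset_plane_of_iff)
      then show ?thesis by (auto simp: tangents_def)
    next
      case False
      from a \<open>c0 = 0\<close> have "{x. c1*x^2 + c2*x + c3 = 0} = {a}" by (simp add: Z_def)
      with False have "2*c1*a + c2 = 0" by (rule quadratic_one_root_imp_double_root)
      with a \<open>c0 = 0\<close> show ?thesis using tangent[of a] by simp
    qed
  qed
qed

lemma line_normals_tangent: "line_normals (tangent t) (osc_vec t) (tan_Pinf_vec t)"
  unfolding line_normals_def
proof (intro conjI allI impI)
  show "indep2 (osc_vec t) (tan_Pinf_vec t)"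
    by (simp add: indep2_def osc_vec_def tan_Pinf_vec_def v0_eq)
  show "tangent t = plane_of (osc_vec t) \<inter> plane_of (tan_Pinf_vec t)"
  proof
    show "tangent t \<subseteq> plane_of (osc_vec t) \<inter> plane_of (tan_Pinf_vec t)"
      by (simp add: tangent_subset_plane_of_iff vdot_osc_vec_cv vdot_tan_Pinf_vec_cv
          vdot_osc_vec_tan_dir vdot_tan_Pinf_vec_tan_dir)
  next
    show "plane_of (osc_vec t) \<inter> plane_of (tan_Pinf_vec t) \<subseteq> tangent t"
    proof
      fix z assume "z \<in> plane_of (osc_vec t) \<inter> plane_of (tan_Pinf_vec t)"
      moreover obtain z0 z1 z2 z3 where z: "z = (z0,z1,z2,z3)" by (cases z rule: prod_cases4)
      ultimately have e: "z0 - 3*t*z1 + 3*t^2*z2 - t^3*z3 = 0" "z1 - 2*t*z2 + t^2*z3 = 0"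
        by (auto simp: mem_plane_of osc_vec_def tan_Pinf_vec_def algebra_simps)
      then have "z1 = 2*t*z2 - t^2*z3" by (simp add: algebra_simps)
      with e(1) have "z0 = 3*t^2*z2 - 2*t^3*z3"
        by (simp add: algebra_simps power2_eq_square power3_eq_cube)
      with \<open>z1 = _\<close> have "z = vadd (vsc z3 (cv t)) (vsc (z2 - t*z3) (tan_dir t))"
        by (simp add: z cv_def tan_dir_def algebra_simps power2_eq_square power3_eq_cube)
      then show "z \<in> tangent t" unfolding tangent_eq mem_line_of by blast
    qed
  qed
  fix c assume "tangent t \<subseteq> plane_of c"
  moreover obtain c0 c1 c2 c3 where c: "c = (c0,c1,c2,c3)" by (cases c rule: prod_cases4)
  ultimately have e: "c0*t^3 + c1*t^2 + c2*t + c3 = 0" "3*c0*t^2 + 2*c1*t + c2 = 0"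
    by (simp_all add: tangent_subset_plane_of_iff vdot_cv vdot_tan_dir)
  then have c2: "c2 = -3*t^2*c0 - 2*t*c1" by (simp add: algebra_simps eq_neg_iff_add_eq_0)
  with e(1) have c3: "c3 = 2*t^3*c0 + t^2*c1"
    by (simp add: algebra_simps power2_eq_square power3_eq_cube eq_neg_iff_add_eq_0)
  have "c = vadd (vsc c0 (osc_vec t)) (vsc (c1 + 3*t*c0) (tan_Pinf_vec t))"
    unfolding c c2 c3
    by (simp add: osc_vec_def tan_Pinf_vec_def algebra_simps power2_eq_square power3_eq_cube)
  then show "\<exists>a b. c = vadd (vsc a (osc_vec t)) (vsc b (tan_Pinf_vec t))" by blast
qed

lemma line_normals_tangent_inf: "line_normals tangent_inf (0,0,0,1) (0,0,1,0::'a::field)"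
  unfolding line_normals_def
proof (intro conjI allI impI)
  show "indep2 (0,0,0,1) (0,0,1,0::'a)" by (simp add: indep2_def v0_eq)
  show "tangent_inf = plane_of (0,0,0,1) \<inter> plane_of (0,0,1,0::'a)"
    by (auto simp: tangent_inf_def mem_line_of mem_plane_of)
  fix c :: "'a v4" assume "tangent_inf \<subseteq> plane_of c"
  moreover obtain c0 c1 c2 c3 where c: "c = (c0,c1,c2,c3)" by (cases c rule: prod_cases4)
  ultimately have "c = vadd (vsc c3 (0,0,0,1)) (vsc c2 (0,0,1,0))"
    by (simp add: tangent_inf_subset_plane_of_iff)
  then show "\<exists>a b. c = vadd (vsc a (0,0,0,1)) (vsc b (0,0,1,0))" by blast
qed

lemma line_normals_tangents: "T \<in> tangents \<Longrightarrow> \<exists>n1 n2. line_normals T n1 n2"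
  unfolding tangents_def using line_normals_tangent line_normals_tangent_inf by blast

lemma tangents_line_of: "T \<in> tangents \<Longrightarrow> \<exists>u v. indep2 u v \<and> T = line_of u (v::'a::field v4)"
proof -
  have "indep2 (cv t) (tan_dir t)" "indep2 (1,0,0,0) (0,1,0,0::'a)" for t :: 'a
    by (simp_all add: indep2_def cv_def tan_dir_def v0_eq)
  then show "T \<in> tangents \<Longrightarrow> ?thesis"
    unfolding tangents_def tangent_eq tangent_inf_def by blast
qed

lemma pt_subset_tangent_iff: "T \<in> tangents \<Longrightarrow> pt z \<subseteq> T \<longleftrightarrow> z \<in> T"
  using tangents_line_of pt_subset_line_of_iff by metis

lemma tangent_Int_tangent:
  assumes "s \<noteq> t" shows "tangent s \<inter> tangent t \<subseteq> {v0}"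
proof
  fix z assume z: "z \<in> tangent s \<inter> tangent t"
  then obtain a b where z_eq: "z = vadd (vsc a (cv s)) (vsc b (tan_dir s))"
    by (auto simp: tangent_eq mem_line_of)
  from z have "z \<in> plane_of (osc_vec t)" "z \<in> plane_of (tan_Pinf_vec t)"
    using line_normals_tangent[of t] unfolding line_normals_def by blast+
  then have "a*(s - t)^3 + b*(3*(s - t)^2) = 0" "a*(s - t)^2 + b*(2*(s - t)) = 0"
    by (simp_all only: mem_plane_of z_eq vdot_vadd_right vdot_vsc_right vdot_osc_vec_cv
        vdot_osc_vec_tan_dir vdot_tan_Pinf_vec_cv vdot_tan_Pinf_vec_tan_dir)
  then have "(s - t)^2 * (a*(s - t) + 3*b) = 0" "(s - t) * (a*(s - t) + 2*b) = 0"
    by (simp_all add: algebra_simps power2_eq_square power3_eq_cube)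
  with assms have "a*(s - t) + 3*b = 0" "a*(s - t) + 2*b = 0" by simp_all
  moreover have "b = (a*(s - t) + 3*b) - (a*(s - t) + 2*b)" by simp
  ultimately have "b = 0" "a = 0" using assms by simp_all
  then show "z \<in> {v0}" by (simp add: z_eq vadd_vsc_zero)
qed

lemma tangent_Int_tangent_inf: "tangent t \<inter> tangent_inf \<subseteq> {v0}"
proof
  fix z assume z: "z \<in> tangent t \<inter> tangent_inf"
  then obtain a b where z_eq: "z = (a, b, 0, 0)" by (auto simp: tangent_inf_def mem_line_of)
  from z have "z \<in> plane_of (osc_vec t)" "z \<in> plane_of (tan_Pinf_vec t)"
    using line_normals_tangent[of t] unfolding line_normals_def by blast+
  then have "a - 3*t*b = 0" "b = 0"
    by (simp_all add: mem_plane_of z_eq osc_vec_def tan_Pinf_vec_def)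
  then show "z \<in> {v0}" by (simp add: z_eq v0_eq)
qed

lemma tangents_Int:
  assumes "T1 \<in> tangents" "T2 \<in> tangents" "T1 \<noteq> T2" shows "T1 \<inter> T2 \<subseteq> {v0}"
proof (cases "T1 = tangent_inf")
  case True
  with assms obtain t where "T2 = tangent t" by (auto simp: tangents_def)
  with True show ?thesis using tangent_Int_tangent_inf[of t] by blast
next
  case False
  with assms(1) obtain s where s: "T1 = tangent s" by (auto simp: tangents_def)
  show ?thesis
  proof (cases "T2 = tangent_inf")
    case True
    with s show ?thesis using tangent_Int_tangent_inf[of s] by blast
  next
    case False
    with assms(2) obtain t where "T2 = tangent t" by (auto simp: tangents_def)
    with s assms(3) show ?thesis using tangent_Int_tangent[of s t] by blast
  qed
qed

lemma tangent_through_PG_point_unique: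
  assumes "p \<in> PG_points" "T \<in> tangents" "T' \<in> tangents" "p \<subseteq> T" "p \<subseteq> T'"
  shows "T = T'"
proof (rule ccontr)
  assume "T \<noteq> T'"
  obtain z where "z \<noteq> v0" "z \<in> T \<inter> T'" using PG_point_in_subspace[of p "T \<inter> T'"] assms by auto
  with tangents_Int[OF assms(2,3) \<open>T \<noteq> T'\<close>] show False by blast
qed

lemma cv_nonzero: "cv t \<noteq> v0"
  by (simp add: cv_def v0_eq)

lemma inj_tangent: "inj (tangent :: 'a::field \<Rightarrow> _)"
proof (rule injI)
  fix s t :: 'a assume "tangent s = tangent t"
  moreover have "cv s \<in> tangent s" by (simp add: tangent_eq line_of_left)
  ultimately have "cv s \<in> tangent s \<inter> tangent t" by simp
  with tangent_Int_tangent[of s t] cv_nonzero show "s = t" by blast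
qed

lemma tangent_neq_tangent_inf: "tangent t \<noteq> tangent_inf"
proof
  assume "tangent t = tangent_inf"
  moreover have "cv t \<in> tangent t" by (simp add: tangent_eq line_of_left)
  ultimately have "cv t \<in> tangent t \<inter> tangent_inf" by simp
  with tangent_Int_tangent_inf[of t] cv_nonzero show False by blast
qed

lemma card_tangents: "card (tangents :: 'a::{field,finite} v4 set set) = CARD('a) + 1"
proof -
  have "tangent_inf \<notin> range (tangent :: 'a \<Rightarrow> _)" using tangent_neq_tangent_inf by auto
  then show ?thesis by (simp add: tangents_def card_image[OF inj_tangent])
qed

subsection \<open>The pencils of the tangents\<close>

lemma pencil_tangent:
  "pencil (tangent t) = insert (plane_of (tan_Pinf_vec t)) (range (\<lambda>r. plane_of (tan_pt_vec t r)))"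
  (is "_ = ?P")
proof (rule Set.set_eqI, rule iffI)
  have tan_pt: "tan_pt_vec t r = vadd (vsc 1 (osc_vec t)) (vsc (t - r) (tan_Pinf_vec t))" for r
    by (simp add: tan_pt_vec_def osc_vec_def tan_Pinf_vec_def algebra_simps
        power2_eq_square power3_eq_cube)
  fix \<pi>
  assume "\<pi> \<in> pencil (tangent t)"
  then obtain a b where ab: "(a, b) \<noteq> (0, 0)"
    and \<pi>: "\<pi> = plane_of (vadd (vsc a (osc_vec t)) (vsc b (tan_Pinf_vec t)))"
    unfolding pencil_line_normals_iff[OF line_normals_tangent] by blast
  show "\<pi> \<in> ?P"
  proof (cases "a = 0")
    case True
    with ab have "b \<noteq> 0" by simp
    moreover have "vadd (vsc a (osc_vec t)) (vsc b (tan_Pinf_vec t)) = vsc b (tan_Pinf_vec t)"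
      using True by (simp add: osc_vec_def tan_Pinf_vec_def)
    ultimately show ?thesis by (simp add: \<pi> plane_of_vsc)
  next
    case False
    have "vsc a (tan_pt_vec t (t - b/a)) =
        vadd (vsc (a*1) (osc_vec t)) (vsc (a*(t - (t - b/a))) (tan_Pinf_vec t))"
      by (simp only: tan_pt vadd_vsc_mult)
    with False have "vadd (vsc a (osc_vec t)) (vsc b (tan_Pinf_vec t)) = vsc a (tan_pt_vec t (t - b/a))"
      by simp
    with False have "\<pi> = plane_of (tan_pt_vec t (t - b/a))" by (simp add: \<pi> plane_of_vsc)
    then show ?thesis by blast
  qed
next
  fix \<pi>
  assume "\<pi> \<in> ?P"
  moreover have "plane_of (tan_Pinf_vec t) \<in> pencil (tangent t)"
    unfolding pencil_line_normals_iff[OF line_normals_tangent]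
    by (intro exI[of _ 0] exI[of _ 1]) (simp add: osc_vec_def tan_Pinf_vec_def)
  moreover have "plane_of (tan_pt_vec t r) \<in> pencil (tangent t)" for r
    unfolding pencil_line_normals_iff[OF line_normals_tangent]
    by (intro exI[of _ 1] exI[of _ "t - r"])
      (simp add: tan_pt_vec_def osc_vec_def tan_Pinf_vec_def algebra_simps
        power2_eq_square power3_eq_cube)
  ultimately show "\<pi> \<in> pencil (tangent t)" by blast
qed

lemma pencil_tangent_inf:
  "pencil tangent_inf = insert osc_inf (range (\<lambda>s::'a::field. plane_of (taninf_pt_vec s)))"
  (is "_ = ?P")
proof (rule Set.set_eqI, rule iffI)
  fix \<pi> :: "'a v4 set"
  assume "\<pi> \<in> pencil tangent_inf"
  then obtain a b where ab: "(a, b) \<noteq> (0, 0)" and \<pi>: "\<pi> = plane_of (0, 0, b, a)"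
    unfolding pencil_line_normals_iff[OF line_normals_tangent_inf] by auto
  show "\<pi> \<in> ?P"
  proof (cases "b = 0")
    case True
    with ab have "(0, 0, b, a) = vsc a (0,0,0,1)" "a \<noteq> 0" by simp_all
    then have "\<pi> = osc_inf" unfolding \<pi> osc_inf_def by (metis plane_of_vsc)
    then show ?thesis by blast
  next
    case False
    then have "(0, 0, b, a) = vsc b (taninf_pt_vec (- a/b))" by (simp add: taninf_pt_vec_def)
    with False have "\<pi> = plane_of (taninf_pt_vec (- a/b))" by (simp add: \<pi> plane_of_vsc)
    then show ?thesis by blast
  qed
next
  fix \<pi> :: "'a v4 set"
  assume "\<pi> \<in> ?P"
  moreover have "osc_inf \<in> pencil tangent_inf"
    unfolding pencil_line_normals_iff[OF line_normals_tangent_inf]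
    by (intro exI[of _ 1] exI[of _ 0]) (simp add: osc_inf_def)
  moreover have "plane_of (taninf_pt_vec s) \<in> pencil tangent_inf" for s :: 'a
    unfolding pencil_line_normals_iff[OF line_normals_tangent_inf]
    by (intro exI[of _ "-s"] exI[of _ 1]) (simp add: taninf_pt_vec_def)
  ultimately show "\<pi> \<in> pencil tangent_inf" by blast
qed

lemma osc_plane_in_pencil: "osc_plane t \<in> pencil (tangent t)"
  by (simp add: pencil_tangent osc_plane_eq)

lemma osc_inf_in_pencil: "osc_inf \<in> pencil tangent_inf"
  by (simp add: pencil_tangent_inf)

lemma pencil_tangent_cases:
  assumes "\<pi> \<in> pencil (tangent t)"
  obtains "\<pi> = osc_plane t" | "two_C_plane \<pi>"
proof -
  consider "\<pi> = plane_of (tan_Pinf_vec t)" | r where "\<pi> = plane_of (tan_pt_vec t r)"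
    using assms by (auto simp: pencil_tangent)
  then show thesis
  proof cases
    case 1
    then show ?thesis by (intro that(2)) (simp add: two_C_plane_tan_Pinf_vec)
  next
    case (2 r)
    then show ?thesis using that two_C_plane_tan_pt_vec[of r t] by (cases "r = t") (auto simp: osc_plane_eq)
  qed
qed

lemma pencil_tangent_inf_cases:
  assumes "\<pi> \<in> pencil tangent_inf"
  obtains "\<pi> = osc_inf" | "two_C_plane \<pi>"
  using assms two_C_plane_taninf_pt_vec by (auto simp: pencil_tangent_inf)

lemma pencil_tangent_Gamma: "pencil (tangent t) \<inter> Gamma_planes = {osc_plane t}"
  using osc_plane_in_pencil Gamma_not_two_C
  by (auto simp: Gamma_planes_def elim: pencil_tangent_cases)

lemma pencil_tangent_inf_Gamma: "pencil tangent_inf \<inter> Gamma_planes = {osc_inf}"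
  using osc_inf_in_pencil Gamma_not_two_C
  by (auto simp: Gamma_planes_def elim: pencil_tangent_inf_cases)

lemma pencil_tangent_two_C:
  "pencil (tangent t) \<inter> {\<pi>. two_C_plane \<pi>} =
     insert (plane_of (tan_Pinf_vec t)) ((\<lambda>r. plane_of (tan_pt_vec t r)) ` (- {t}))"
proof -
  have "\<not> two_C_plane (plane_of (tan_pt_vec t t))"
    using Gamma_not_two_C[of "osc_plane t"] by (simp add: Gamma_planes_def osc_plane_eq)
  then show ?thesis
    using two_C_plane_tan_pt_vec[of _ t] two_C_plane_tan_Pinf_vec[of t]
    by (auto simp: pencil_tangent)
qed

lemma pencil_tangent_inf_two_C:
  "pencil tangent_inf \<inter> {\<pi>. two_C_plane \<pi>} = range (\<lambda>s. plane_of (taninf_pt_vec s))"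
  using Gamma_not_two_C[of osc_inf] two_C_plane_taninf_pt_vec
  by (auto simp: pencil_tangent_inf Gamma_planes_def)

lemma card_pencil_tangent_two_C:
  "card (pencil (tangent (t::'a)) \<inter> {\<pi>. two_C_plane \<pi>}) = CARD('a::{field,finite})"
proof -
  have inj: "inj_on (\<lambda>r. plane_of (tan_pt_vec t r)) (- {t})"
  proof (rule inj_onI)
    fix r r' assume "r \<in> - {t}" "plane_of (tan_pt_vec t r) = plane_of (tan_pt_vec t r')"
    then have "{Pt t, Pt r} = {Pt t, Pt r'}" by (metis cubic_points_tan_pt_vec)
    moreover have "Pt r \<noteq> Pt t" using \<open>r \<in> - {t}\<close> injD[OF inj_Pt] by blast
    ultimately have "Pt r = Pt r'" by (metis doubleton_eq_iff)
    then show "r = r'" by (rule injD[OF inj_Pt])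
  qed
  have "plane_of (tan_Pinf_vec t) \<noteq> plane_of (tan_pt_vec t r)" for r
  proof
    assume "plane_of (tan_Pinf_vec t) = plane_of (tan_pt_vec t r)"
    then have "{Pt t, Pinf} = {Pt t, Pt r}" by (metis cubic_points_tan_pt_vec cubic_points_tan_Pinf_vec)
    then show False using Pt_neq_Pinf by (metis doubleton_eq_iff)
  qed
  moreover have "card ((\<lambda>r. plane_of (tan_pt_vec t r)) ` (- {t})) = CARD('a) - 1"
    using inj by (simp add: card_image Compl_eq_Diff_UNIV card_Diff_singleton)
  ultimately show ?thesis
    by (simp add: pencil_tangent_two_C image_iff finite_UNIV_card_ge_0)
qed

lemma card_pencil_tangent_inf_two_C:
  "card (pencil (tangent_inf :: 'a v4 set) \<inter> {\<pi>. two_C_plane \<pi>}) = CARD('a::{field,finite})"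
proof -
  have "inj (\<lambda>s::'a. plane_of (taninf_pt_vec s))"
  proof (rule injI)
    fix s s' :: 'a assume "plane_of (taninf_pt_vec s) = plane_of (taninf_pt_vec s')"
    then have "{Pt s, Pinf} = {Pt s', Pinf}" by (metis cubic_points_taninf_pt_vec)
    then have "Pt s = Pt s'" using Pt_neq_Pinf by (metis doubleton_eq_iff)
    then show "s = s'" by (rule injD[OF inj_Pt])
  qed
  then show ?thesis by (simp add: pencil_tangent_inf_two_C card_image)
qed

lemma pencil_tangents_cases:
  assumes "T \<in> tangents" "\<pi> \<in> pencil T"
  obtains "\<pi> \<in> Gamma_planes" | "two_C_plane \<pi>"
  using assms by (auto simp: tangents_def Gamma_planes_def
      elim: pencil_tangent_cases pencil_tangent_inf_cases)

lemma Gamma_plane_in_pencil_of_tangent: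
  "T \<in> tangents \<Longrightarrow> \<exists>G\<in>Gamma_planes. G \<in> pencil T"
  using osc_plane_in_pencil osc_inf_in_pencil by (auto simp: tangents_def Gamma_planes_def)

lemma card_pencil_tangents_Gamma:
  "T \<in> tangents \<Longrightarrow> card (pencil T \<inter> Gamma_planes) = 1"
  by (auto simp: tangents_def pencil_tangent_Gamma pencil_tangent_inf_Gamma)

lemma card_pencil_tangents_two_C:
  "T \<in> tangents \<Longrightarrow> card (pencil T \<inter> {\<pi>. two_C_plane \<pi>}) = CARD('a)"
  for T :: "'a::{field,finite} v4 set"
  by (auto simp: tangents_def card_pencil_tangent_two_C card_pencil_tangent_inf_two_C)

lemma pencil_Int_pencil_tangents:
  assumes T1: "T1 \<in> tangents" and T2: "T2 \<in> tangents" and "T1 \<noteq> T2"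
  shows "pencil T1 \<inter> pencil T2 = {}"
proof (rule ccontr)
  assume "pencil T1 \<inter> pencil T2 \<noteq> {}"
  then obtain \<pi> where \<pi>: "\<pi> \<in> pencil T1" "T2 \<subseteq> \<pi>" by (auto simp: pencil_def)
  obtain n1 n2 where L: "line_normals T1 n1 n2" using line_normals_tangents[OF T1] by blast
  obtain u v where uv: "indep2 u v" "T2 = line_of u v" using tangents_line_of[OF T2] by blast
  have meet: "\<exists>z. z \<noteq> v0 \<and> z \<in> T2 \<and> z \<in> T1"
  proof (cases "T2 \<subseteq> plane_of n1 \<and> T2 \<subseteq> plane_of n2")
    case True
    then have "u \<in> T1" using L line_of_left[of u v] uv(2) by (auto simp: line_normals_def)
    then show ?thesis using indep2_imp_nonzero(1)[OF uv(1)] line_of_left[of u v] uv(2) by blast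
  next
    case False
    then show ?thesis
      using line_in_pencil_plane_meets_axis[OF L uv(1) \<pi>(1)] line_normals_planes_in_pencil[OF L]
        \<pi>(2) uv(2) by blast
  qed
  with tangents_Int[OF T1 T2 \<open>T1 \<noteq> T2\<close>] show False by blast
qed

lemma inj_on_pencil_tangents: "inj_on pencil tangents"
proof (rule inj_onI)
  fix T1 T2 assume T: "T1 \<in> tangents" "T2 \<in> tangents" and "pencil T1 = pencil T2"
  moreover obtain G where "G \<in> pencil T1" using Gamma_plane_in_pencil_of_tangent[OF T(1)] by blast
  ultimately show "T1 = T2" using pencil_Int_pencil_tangents by blast
qed

lemma Union_pencil_tangents:
  "\<Union> (pencil ` tangents) = Gamma_planes \<union> {\<pi> :: 'a::{field,finite} v4 set. two_C_plane \<pi>}"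
proof (intro equalityI subsetI)
  fix \<pi> assume "\<pi> \<in> \<Union> (pencil ` tangents)"
  then obtain T where "T \<in> tangents" "\<pi> \<in> pencil T" by blast
  then show "\<pi> \<in> Gamma_planes \<union> {\<pi>. two_C_plane \<pi>}" by (cases rule: pencil_tangents_cases) simp_all
next
  fix \<pi> :: "'a v4 set" assume "\<pi> \<in> Gamma_planes \<union> {\<pi>. two_C_plane \<pi>}"
  then consider t where "\<pi> = osc_plane t" | "\<pi> = osc_inf" | "two_C_plane \<pi>"
    by (auto simp: Gamma_planes_def)
  then show "\<pi> \<in> \<Union> (pencil ` tangents)"
  proof cases
    case (1 t)
    moreover have "tangent t \<in> tangents" by (simp add: tangents_def)
    ultimately show ?thesis using osc_plane_in_pencil[of t] by blast
  next
    case 2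
    moreover have "tangent_inf \<in> tangents" by (simp add: tangents_def)
    ultimately show ?thesis using osc_inf_in_pencil by blast
  next
    case 3
    then obtain T where "T \<in> tangents" "T \<subseteq> \<pi>" using two_C_plane_contains_tangent by blast
    moreover have "\<pi> \<in> PG_planes" using 3 by (simp add: two_C_plane_def)
    ultimately show ?thesis unfolding pencil_def by blast
  qed
qed

lemma tangent_pencils_partition:
  "\<exists>PP :: 'a::{field,finite} v4 set set set.
      card PP = CARD('a) + 1
    \<and> (\<forall>\<Pi>\<in>PP. \<forall>\<Pi>'\<in>PP. \<Pi> \<noteq> \<Pi>' \<longrightarrow> \<Pi> \<inter> \<Pi>' = {})
    \<and> \<Union>PP = Gamma_planes \<union> {\<pi>. two_C_plane \<pi>}
    \<and> (\<forall>\<Pi>\<in>PP. \<exists>T\<in>tangents. \<Pi> = pencil T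
          \<and> card (\<Pi> \<inter> Gamma_planes) = 1
          \<and> card (\<Pi> \<inter> {\<pi>. two_C_plane \<pi>}) = CARD('a))"
proof (intro exI[of _ "pencil ` tangents"] conjI ballI impI)
  show "card (pencil ` (tangents :: 'a v4 set set)) = CARD('a) + 1"
    by (simp add: card_image[OF inj_on_pencil_tangents] card_tangents)
  show "\<Pi> \<inter> \<Pi>' = {}" if "\<Pi> \<in> pencil ` tangents" "\<Pi>' \<in> pencil ` tangents" "\<Pi> \<noteq> \<Pi>'"
    for \<Pi> \<Pi>' :: "'a v4 set set"
    using that pencil_Int_pencil_tangents by blast
  show "\<Union> (pencil ` tangents) = Gamma_planes \<union> {\<pi>. two_C_plane (\<pi> :: 'a v4 set)}"
    by (rule Union_pencil_tangents)
  show "\<exists>T\<in>tangents. \<Pi> = pencil T \<and> card (\<Pi> \<inter> Gamma_planes) = 1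
          \<and> card (\<Pi> \<inter> {\<pi>. two_C_plane \<pi>}) = CARD('a)"
    if "\<Pi> \<in> pencil ` (tangents :: 'a v4 set set)" for \<Pi>
    using that card_pencil_tangents_Gamma card_pencil_tangents_two_C by blast
qed

subsection \<open>Lines in no osculating plane\<close>

definition nGamma_line :: "'a::field v4 set \<Rightarrow> bool" where
  "nGamma_line l \<longleftrightarrow> l \<in> PG_lines \<and> (\<forall>G\<in>Gamma_planes. \<not> l \<subseteq> G)"

lemma EnGamma_imp_nGamma_line:
  "EnGamma emb l \<Longrightarrow> nGamma_line l \<and> (\<forall>P\<in>twisted_cubic. \<not> P \<subseteq> l)"
  by (simp add: EnGamma_def nGamma_line_def)

lemma nGamma_lineE:
  assumes "nGamma_line l"
  obtains u v where "indep2 u v" "l = line_of u v" "\<forall>G\<in>Gamma_planes. \<not> l \<subseteq> G"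
  using assms by (auto simp: nGamma_line_def PG_lines_def)

lemma nGamma_line_point_on_tangent_two_C_plane:
  assumes "nGamma_line l" and T: "T \<in> tangents" and p: "p \<in> PG_points" "p \<subseteq> l" "p \<subseteq> T"
  shows "\<exists>\<pi>\<in>pencil T. two_C_plane \<pi> \<and> l \<subseteq> \<pi>"
proof -
  obtain u v where l: "indep2 u v" "l = line_of u v" and noG: "\<forall>G\<in>Gamma_planes. \<not> l \<subseteq> G"
    using assms(1) by (rule nGamma_lineE)
  obtain z where z: "z \<noteq> v0" "z \<in> l \<inter> T" using PG_point_in_subspace p by (metis le_inf_iff)
  obtain n1 n2 where "line_normals T n1 n2" using line_normals_tangents[OF T] by blast
  then obtain \<pi> where \<pi>: "\<pi> \<in> pencil T" "l \<subseteq> \<pi>"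
    using pencil_plane_containing_line z l(2) by blast
  with T have "two_C_plane \<pi>" using noG by (cases rule: pencil_tangents_cases) auto
  with \<pi> show ?thesis by blast
qed

lemma nGamma_line_in_pencil_plane_meets_tangent:
  assumes "nGamma_line l" and T: "T \<in> tangents" and \<pi>: "\<pi> \<in> pencil T" "l \<subseteq> \<pi>"
  shows "\<exists>z. z \<noteq> v0 \<and> z \<in> l \<and> z \<in> T"
proof -
  obtain u v where uv: "indep2 u v" "l = line_of u v"
    and noG: "\<forall>G\<in>Gamma_planes. \<not> l \<subseteq> G"
    using assms(1) by (rule nGamma_lineE)
  obtain n1 n2 where L: "line_normals T n1 n2" using line_normals_tangents[OF T] by blast
  obtain G where "G \<in> Gamma_planes" "G \<in> pencil T" using Gamma_plane_in_pencil_of_tangent[OF T] by blast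
  with noG show ?thesis using line_in_pencil_plane_meets_axis[OF L uv(1)] \<pi> uv(2) by blast
qed

lemma nGamma_line_pencil_plane_unique:
  assumes "nGamma_line l" and T: "T \<in> tangents"
    and "\<pi>1 \<in> pencil T" "\<pi>2 \<in> pencil T" "l \<subseteq> \<pi>1" "l \<subseteq> \<pi>2"
  shows "\<pi>1 = \<pi>2"
proof (rule ccontr)
  assume "\<pi>1 \<noteq> \<pi>2"
  obtain n1 n2 where L: "line_normals T n1 n2" using line_normals_tangents[OF T] by blast
  obtain G where "G \<in> Gamma_planes" "T \<subseteq> G" using Gamma_plane_in_pencil_of_tangent[OF T]
    by (auto simp: pencil_def)
  moreover have "l \<subseteq> T" using pencil_Int_subset[OF L] assms \<open>\<pi>1 \<noteq> \<pi>2\<close> by blast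
  ultimately have "G \<in> Gamma_planes" "l \<subseteq> G" by blast+
  with assms(1) show False by (auto simp: nGamma_line_def)
qed

lemma nGamma_line_meets_tangent_once:
  assumes "nGamma_line l" and T: "T \<in> tangents"
    and p1: "p1 \<in> PG_points" "p1 \<subseteq> l" "p1 \<subseteq> T" and p2: "p2 \<in> PG_points" "p2 \<subseteq> l" "p2 \<subseteq> T"
  shows "p1 = p2"
proof (rule ccontr)
  assume "p1 \<noteq> p2"
  obtain u v where l: "indep2 u v" "l = line_of u v"
    and noG: "\<forall>G\<in>Gamma_planes. \<not> l \<subseteq> G"
    using assms(1) by (rule nGamma_lineE)
  obtain z1 where z1: "z1 \<noteq> v0" "p1 = pt z1" "z1 \<in> l" "z1 \<in> T"
    using PG_point_in_subspace[of p1 "l \<inter> T"] p1 by auto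
  obtain z2 where z2: "z2 \<noteq> v0" "p2 = pt z2" "z2 \<in> l" "z2 \<in> T"
    using PG_point_in_subspace[of p2 "l \<inter> T"] p2 by auto
  obtain G where G: "G \<in> Gamma_planes" "G \<in> pencil T"
    using Gamma_plane_in_pencil_of_tangent[OF T] by blast
  then obtain w where "G = plane_of w" "T \<subseteq> G" by (auto simp: pencil_iff)
  with z1 z2 have "vdot w z1 = 0" "vdot w z2 = 0" by (auto simp: mem_plane_of)
  then have "l \<subseteq> G"
    using line_of_subset_plane_of_if_two_points[of z1 u v z2 w] z1 z2 \<open>p1 \<noteq> p2\<close>
    by (simp add: l(2) \<open>G = plane_of w\<close>)
  with noG G(1) show False by blast
qed
lemma nGamma_line_two_C_plane_T_point:
  fixes l :: "'a::{field,finite} v4 set"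
  assumes l: "nGamma_line l" and noC: "\<forall>P\<in>twisted_cubic. \<not> P \<subseteq> l"
    and \<pi>: "two_C_plane \<pi>" "l \<subseteq> \<pi>"
  shows "\<exists>T\<in>tangents. \<pi> \<in> pencil T \<and> (\<exists>p\<in>PG_points. T_point p \<and> p \<subseteq> l \<and> p \<subseteq> T)"
proof -
  obtain T where T: "T \<in> tangents" "T \<subseteq> \<pi>" using two_C_plane_contains_tangent[OF \<pi>(1)] by blast
  have "\<pi> \<in> pencil T" using T \<pi>(1) by (simp add: pencil_def two_C_plane_def)
  then obtain z where z: "z \<noteq> v0" "z \<in> l" "z \<in> T"
    using nGamma_line_in_pencil_plane_meets_tangent[OF l T(1)] \<pi>(2) by blast
  have "pt z \<subseteq> l" using z(2) l by (metis nGamma_lineE pt_subset_line_of_iff)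
  moreover have "pt z \<subseteq> T" using z(3) T(1) by (simp add: pt_subset_tangent_iff)
  moreover have "pt z \<in> PG_points" using z(1) PG_points_pt by blast
  moreover from calculation have "T_point (pt z)" using noC T(1) by (auto simp: T_point_def)
  ultimately show ?thesis using T(1) \<open>\<pi> \<in> pencil T\<close> by blast
qed

lemma card_T_points_eq_card_two_C_planes:
  fixes l :: "'a::{field,finite} v4 set"
  assumes l: "nGamma_line l" and noC: "\<forall>P\<in>twisted_cubic. \<not> P \<subseteq> l"
  shows "card {p \<in> PG_points. T_point p \<and> p \<subseteq> l} = card {\<pi>. two_C_plane \<pi> \<and> l \<subseteq> \<pi>}"
proof -
  let ?S = "{p \<in> PG_points. T_point p \<and> p \<subseteq> l}"
  define plane_at where
    "plane_at p = (SOME \<pi>. \<exists>T\<in>tangents. p \<subseteq> T \<and> \<pi> \<in> pencil T \<and> two_C_plane \<pi> \<and> l \<subseteq> \<pi>)"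
    for p
  have plane_at: "\<exists>T\<in>tangents. p \<subseteq> T \<and> plane_at p \<in> pencil T \<and> two_C_plane (plane_at p) \<and>
      l \<subseteq> plane_at p" if "p \<in> ?S" for p
  proof -
    from that obtain T where T: "T \<in> tangents" "p \<subseteq> T" and p: "p \<in> PG_points" "p \<subseteq> l"
      by (auto simp: T_point_def)
    then have "\<exists>\<pi>. \<exists>T\<in>tangents. p \<subseteq> T \<and> \<pi> \<in> pencil T \<and> two_C_plane \<pi> \<and> l \<subseteq> \<pi>"
      using nGamma_line_point_on_tangent_two_C_plane[OF l T(1) p T(2)] by blast
    then show ?thesis unfolding plane_at_def by (rule someI_ex)
  qed
  have "inj_on plane_at ?S"
  proof (rule inj_onI)
    fix p1 p2 assume p: "p1 \<in> ?S" "p2 \<in> ?S" "plane_at p1 = plane_at p2"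
    obtain T1 where T1: "T1 \<in> tangents" "p1 \<subseteq> T1" "plane_at p1 \<in> pencil T1"
      using plane_at[OF p(1)] by blast
    obtain T2 where T2: "T2 \<in> tangents" "p2 \<subseteq> T2" "plane_at p2 \<in> pencil T2"
      using plane_at[OF p(2)] by blast
    have "T1 = T2"
    proof (rule ccontr)
      assume "T1 \<noteq> T2"
      with T1(1) T2(1) have "pencil T1 \<inter> pencil T2 = {}" by (rule pencil_Int_pencil_tangents)
      with T1(3) T2(3) p(3) show False by auto
    qed
    with p(1,2) T1 T2 show "p1 = p2" using nGamma_line_meets_tangent_once[OF l T1(1)] by auto
  qed
  moreover have "plane_at ` ?S = {\<pi>. two_C_plane \<pi> \<and> l \<subseteq> \<pi>}"
  proof (intro equalityI subsetI)
    fix \<pi> assume "\<pi> \<in> plane_at ` ?S"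
    then show "\<pi> \<in> {\<pi>. two_C_plane \<pi> \<and> l \<subseteq> \<pi>}" using plane_at by blast
  next
    fix \<pi> assume \<pi>: "\<pi> \<in> {\<pi>. two_C_plane \<pi> \<and> l \<subseteq> \<pi>}"
    then obtain T p where T: "T \<in> tangents" "\<pi> \<in> pencil T" and p: "p \<in> ?S" "p \<subseteq> T"
      using nGamma_line_two_C_plane_T_point[OF l noC] by blast
    obtain T' where T': "T' \<in> tangents" "p \<subseteq> T'" "plane_at p \<in> pencil T'" "l \<subseteq> plane_at p"
      using plane_at[OF p(1)] by blast
    have "T' = T" using tangent_through_PG_point_unique T'(1,2) T(1) p by blast
    then have "plane_at p = \<pi>"
      using nGamma_line_pencil_plane_unique[OF l T(1)] T'(3,4) T(2) \<pi> by blast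
    with p(1) show "\<pi> \<in> plane_at ` ?S" by blast
  qed
  ultimately show ?thesis using card_image by fastforce
qed
subsection \<open>Characteristic 3\<close>

definition char_3_axis :: "'a::field v4 set" where
  "char_3_axis = line_of (0,1,0,0) (0,0,1,0)"

lemma line_normals_char_3_axis: "line_normals char_3_axis (1,0,0,0) (0,0,0,1::'a::field)"
  unfolding line_normals_def
proof (intro conjI allI impI)
  show "indep2 (1,0,0,0) (0,0,0,1::'a)" by (simp add: indep2_def v0_eq)
  show "char_3_axis = plane_of (1,0,0,0) \<inter> plane_of (0,0,0,1::'a)"
    by (auto simp: char_3_axis_def mem_line_of mem_plane_of)
  fix c :: "'a v4" assume "char_3_axis \<subseteq> plane_of c"
  moreover obtain c0 c1 c2 c3 where c: "c = (c0,c1,c2,c3)" by (cases c rule: prod_cases4)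
  ultimately have "c = vadd (vsc c0 (1,0,0,0)) (vsc c3 (0,0,0,1))"
    by (simp add: char_3_axis_def line_of_subset_plane_of_iff)
  then show "\<exists>a b. c = vadd (vsc a (1,0,0,0)) (vsc b (0,0,0,1))" by blast
qed

lemma Gamma_planes_char_3:
  assumes "(3::'a::{field,finite}) = 0"
  shows "Gamma_planes = pencil (char_3_axis :: 'a v4 set)"
proof (rule Set.set_eqI, rule iffI)
  have osc_vec: "osc_vec s = vadd (vsc 1 (1,0,0,0)) (vsc (-(s^3)) (0,0,0,1))" for s :: 'a
    using assms by (simp add: osc_vec_def)
  fix G :: "'a v4 set" assume "G \<in> Gamma_planes"
  then consider s where "G = osc_plane s" | "G = osc_inf" by (auto simp: Gamma_planes_def)
  then have "\<exists>a b. (a, b) \<noteq> (0, 0) \<and> G = plane_of (vadd (vsc a (1,0,0,0)) (vsc b (0,0,0,1)))"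
  proof cases
    case (1 s)
    then show ?thesis using osc_vec[of s]
      by (intro exI[of _ 1] exI[of _ "-(s^3)"]) (simp add: osc_plane_def)
  next
    case 2
    then show ?thesis by (intro exI[of _ 0] exI[of _ 1]) (simp add: osc_inf_def)
  qed
  then show "G \<in> pencil char_3_axis"
    by (simp add: pencil_line_normals_iff[OF line_normals_char_3_axis])
next
  fix G :: "'a v4 set" assume "G \<in> pencil char_3_axis"
  then obtain a b where ab: "(a, b) \<noteq> (0, 0)" and G: "G = plane_of (a, 0, 0, b)"
    unfolding pencil_line_normals_iff[OF line_normals_char_3_axis] by auto
  show "G \<in> Gamma_planes"
  proof (cases "a = 0")
    case True
    with ab have "(a, 0, 0, b) = vsc b (0,0,0,1)" "b \<noteq> 0" by simp_all
    then have "G = osc_inf" unfolding G osc_inf_def by (metis plane_of_vsc)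
    then show ?thesis by (simp add: Gamma_planes_def)
  next
    case False
    obtain s where "s^3 = -(b/a)" using surj_cube_char_3[OF assms] by (metis surjD)
    with False assms have "(a, 0, 0, b) = vsc a (osc_vec s)" by (simp add: osc_vec_def)
    with False have "G = osc_plane s" unfolding G osc_plane_def by (metis plane_of_vsc)
    then show ?thesis by (simp add: Gamma_planes_def)
  qed
qed

lemma nGamma_line_point_on_tangent_unique_Gamma_char_3:
  fixes l :: "'a::{field,finite} v4 set"
  assumes "(3::'a) = 0" and l: "nGamma_line l"
    and p: "p \<in> PG_points" "p \<subseteq> l" and T: "T \<in> tangents" "p \<subseteq> T"
  shows "card {G \<in> Gamma_planes. p \<subseteq> G} = 1"
proof -
  obtain u v where uv: "indep2 u v" "l = line_of u v" and noG: "\<forall>G\<in>Gamma_planes. \<not> l \<subseteq> G"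
    using l by (rule nGamma_lineE)
  obtain G0 where G0: "G0 \<in> Gamma_planes" "T \<subseteq> G0"
    using Gamma_plane_in_pencil_of_tangent[OF T(1)] by (auto simp: pencil_def)
  obtain z where z: "z \<noteq> v0" "p = pt z" "z \<in> l" using PG_point_in_subspace p by blast
  have "G = G0" if G: "G \<in> Gamma_planes" "p \<subseteq> G" for G
  proof (rule ccontr)
    assume "G \<noteq> G0"
    then have "z \<in> char_3_axis"
      using pencil_Int_subset[OF line_normals_char_3_axis] G G0 T(2) z(2) pt_self[of z]
        Gamma_planes_char_3[OF assms(1)] by blast
    then obtain \<pi> where "\<pi> \<in> pencil char_3_axis" "l \<subseteq> \<pi>"
      using pencil_plane_containing_line[OF line_normals_char_3_axis] z(1,3) uv(2) by blast
    with noG show False using Gamma_planes_char_3[OF assms(1)] by blast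
  qed
  then have "{G \<in> Gamma_planes. p \<subseteq> G} = {G0}" using G0 T(2) by blast
  then show ?thesis by simp
qed

theorem lemma3p3:
  fixes emb :: "'a::{field,finite} \<Rightarrow> 'b::{field,finite}"
  assumes q5: "CARD('a) \<ge> 5"
    and ext_card: "CARD('b) = CARD('a) ^ 2"
    and ext_emb: "field_emb emb"
  shows
   "(\<exists>PP :: 'a v4 set set set.
        card PP = CARD('a) + 1
      \<and> (\<forall>\<Pi>\<in>PP. \<forall>\<Pi>'\<in>PP. \<Pi> \<noteq> \<Pi>' \<longrightarrow> \<Pi> \<inter> \<Pi>' = {})
      \<and> \<Union>PP = Gamma_planes \<union> {\<pi>. two_C_plane \<pi>}
      \<and> (\<forall>\<Pi>\<in>PP. \<exists>T\<in>tangents. \<Pi> = pencil T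
            \<and> card (\<Pi> \<inter> Gamma_planes) = 1
            \<and> card (\<Pi> \<inter> {\<pi>. two_C_plane \<pi>}) = CARD('a)))
    \<and> (\<forall>l. EnGamma emb l \<longrightarrow>
         (\<forall>T\<in>tangents. \<forall>p\<in>PG_points. p \<subseteq> l \<and> p \<subseteq> T \<longrightarrow>
            (\<exists>\<pi>. two_C_plane \<pi> \<and> l \<subseteq> \<pi>)))
    \<and> (CARD('a) mod 3 \<noteq> 0 \<longrightarrow>
         (\<forall>l. EnGamma emb l \<and> (\<exists>\<pi>. two_C_plane \<pi> \<and> l \<subseteq> \<pi>) \<longrightarrow>
            (\<exists>T\<in>tangents. \<exists>p\<in>PG_points. p \<subseteq> l \<and> p \<subseteq> T)
          \<and> (\<forall>T\<in>tangents. \<forall>p\<in>PG_points. p \<subseteq> l \<and> p \<subseteq> T \<longrightarrow> T_point p)))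
    \<and> (CARD('a) mod 3 = 0 \<longrightarrow>
         (\<forall>l. EnGamma emb l \<and> (\<exists>\<pi>. two_C_plane \<pi> \<and> l \<subseteq> \<pi>) \<longrightarrow>
            (\<exists>T\<in>tangents. \<exists>p\<in>PG_points. p \<subseteq> l \<and> p \<subseteq> T)
          \<and> (\<forall>T\<in>tangents. \<forall>p\<in>PG_points. p \<subseteq> l \<and> p \<subseteq> T \<longrightarrow> TO_point p)))
    \<and> (\<forall>l. EnGamma emb l \<longrightarrow>
         (CARD('a) mod 3 \<noteq> 0 \<longrightarrow>
            card {p \<in> PG_points. T_point p \<and> p \<subseteq> l} = card {\<pi>. two_C_plane \<pi> \<and> l \<subseteq> \<pi>})
       \<and> (CARD('a) mod 3 = 0 \<longrightarrow>
            card {p \<in> PG_points. TO_point p \<and> p \<subseteq> l} = card {\<pi>. two_C_plane \<pi> \<and> l \<subseteq> \<pi>}))"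
proof -
  have EnGamma_line: "nGamma_line l" "\<forall>P\<in>twisted_cubic. \<not> P \<subseteq> l" if "EnGamma emb l" for l
    using EnGamma_imp_nGamma_line[OF that] by simp_all
  have T_point: "T_point p"
    if "EnGamma emb l" "T \<in> tangents" "p \<in> PG_points" "p \<subseteq> l \<and> p \<subseteq> T" for l T p
    using that EnGamma_line[OF that(1)] by (auto simp: T_point_def)
  have TO_point: "TO_point p" if "CARD('a) mod 3 = 0"
    "EnGamma emb l" "T \<in> tangents" "p \<in> PG_points" "p \<subseteq> l \<and> p \<subseteq> T" for l T p
    using T_point[OF that(2-)] nGamma_line_point_on_tangent_unique_Gamma_char_3
      [OF three_eq_0_if_card_mod_3[OF that(1)] EnGamma_line(1)[OF that(2)] that(4)] that(3,5)
    by (simp add: TO_point_def)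
  have meets_tangent: "\<exists>T\<in>tangents. \<exists>p\<in>PG_points. p \<subseteq> l \<and> p \<subseteq> T"
    if "EnGamma emb l" "\<exists>\<pi>. two_C_plane \<pi> \<and> l \<subseteq> \<pi>" for l
    using that nGamma_line_two_C_plane_T_point EnGamma_line by meson
  have TO_eq_T: "{p \<in> PG_points. TO_point p \<and> p \<subseteq> l} = {p \<in> PG_points. T_point p \<and> p \<subseteq> l}"
    if "CARD('a) mod 3 = 0" "EnGamma emb l" for l
    using TO_point[OF that] by (auto simp: TO_point_def T_point_def)
  show ?thesis
    apply (intro conjI allI impI ballI)
    subgoal by (rule tangent_pencils_partition)
    subgoal for l T p using nGamma_line_point_on_tangent_two_C_plane EnGamma_line by blast
    subgoal for l using meets_tangent by blast
    subgoal for l T p using T_point by blast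
    subgoal for l using meets_tangent by blast
    subgoal for l T p by (rule TO_point) auto
    subgoal for l using card_T_points_eq_card_two_C_planes[OF EnGamma_line] by blast
    subgoal for l using TO_eq_T card_T_points_eq_card_two_C_planes[OF EnGamma_line] by simp
    done
qed

end
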